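(* Let $n\ge2$, let $B$ be the open unit ball of $\mathbb{R}^n$ centered at $0$, let $\psi\in C_0^\infty(\mathbb{R}^n)$ with $\operatorname{supp}\psi\subseteq B$ and $\psi\not\equiv0$, and let $\Omega\subset\mathbb{R}^n$ be a bounded open set star-shaped with respect to every point of $\overline B$. Let $q>n$, $F\in L^q(\Omega)$, and define for $x\in\mathbb{R}^n$ $$v(x)=\int_\Omega F(y)\left[\frac{x-y}{|x-y|^n}\int_{|x-y|}^{+\infty}\psi\Big(y+\xi\frac{x-y}{|x-y|}\Big)\xi^{n-1}d\xi\right]dy.$$ Then $v\in C^0(\mathbb{R}^n)$ (in particular $v\in C^0(\overline\Omega)$).
   Context: $\Omega$ is star-shaped with respect to a point $p$ if $p\in\Omega$ and for every $y\in\Omega$ the segment joining $p$ and $y$ lies in $\Omega$. *)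

theory Defs
  imports "HOL-Analysis.Analysis"
begin

definition star_shaped_wrt :: "'a::real_vector set \<Rightarrow> 'a \<Rightarrow> bool" where
  "star_shaped_wrt \<Omega> p \<longleftrightarrow> p \<in> \<Omega> \<and> (\<forall>y\<in>\<Omega>. closed_segment p y \<subseteq> \<Omega>)"

fun Ck :: "nat \<Rightarrow> ('a::euclidean_space \<Rightarrow> real) \<Rightarrow> bool" where
  "Ck 0 f = continuous_on UNIV f"
| "Ck (Suc k) f = ((\<forall>x. f differentiable (at x)) \<and>
      (\<forall>i\<in>Basis. Ck k (\<lambda>x. frechet_derivative f (at x) i)))"

definition smooth :: "('a::euclidean_space \<Rightarrow> real) \<Rightarrow> bool" where
  "smooth f \<longleftrightarrow> (\<forall>k. Ck k f)"

definition supp :: "('a::topological_space \<Rightarrow> real) \<Rightarrow> 'a set" where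
  "supp f = closure {x. f x \<noteq> 0}"

end

theory Submission
  imports Defs
begin

(* Substituting \<xi> = |x - y| t turns the inner integral, divided by |x - y|^n, into
  g(x,y) = \<integral>_1^\<infinity> \<psi>(y + t(x - y)) t^(n-1) dt, so v(x) = \<integral> F(y) g(x,y) (x - y) dy.
  Since \<psi> vanishes outside the unit ball, the t-integral may be truncated at (|y| + 1)/|x - y|;
  this makes the kernel K(x,y) = g(x,y) (x - y) continuous off the diagonal and bounded by
  C |x - y|^(1-n) for y in the bounded set \<Omega>.  As q > n, the conjugate exponent q' satisfies
  (n - 1) q' < n.  Young's inequality |F K| \<le> \<lambda>^q |F|^q + \<lambda>^(-q') |K|^q' therefore makes
  the contribution of a small ball around x uniformly small, while away from x dominated
  convergence applies. *)

lemma integral_dominated_convergence_eventually: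
  fixes u :: "nat \<Rightarrow> 'a \<Rightarrow> 'b::{banach, second_countable_topology}"
  assumes "f \<in> borel_measurable M" "\<And>i. u i \<in> borel_measurable M" "integrable M w"
    and lim: "AE x in M. (\<lambda>i. u i x) \<longlonglongrightarrow> f x"
    and bound: "eventually (\<lambda>i. AE x in M. norm (u i x) \<le> w x) sequentially"
  shows "(\<lambda>i. integral\<^sup>L M (u i)) \<longlonglongrightarrow> integral\<^sup>L M f"
proof -
  from bound obtain N where w: "\<And>n. N \<le> n \<Longrightarrow> AE x in M. norm (u n x) \<le> w x"
    by (auto simp: eventually_sequentially)
  show ?thesis
  proof (rule LIMSEQ_offset[where k=N], rule integral_dominated_convergence)
    show "AE x in M. norm (u (n + N) x) \<le> w x" for n
      by (rule w) auto
    show "AE x in M. (\<lambda>n. u (n + N) x) \<longlonglongrightarrow> f x"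
      using lim by eventually_elim (rule LIMSEQ_ignore_initial_segment)
  qed (use assms in auto)
qed

lemma Youngs_inequality_scaled:
  fixes u w t q :: real
  assumes q: "1 < q" and u: "0 \<le> u" and w: "0 \<le> w" and t: "0 < t"
  shows "u * w \<le> t powr q * u powr q + t powr (- (q / (q - 1))) * w powr (q / (q - 1))"
proof -
  define q' where "q' = q / (q - 1)"
  have q': "1 < q'" using q unfolding q'_def by (simp add: less_divide_eq)
  have conj: "1 / q + 1 / q' = 1" using q unfolding q'_def by (simp add: field_simps)
  have "u * w = (t * u) * (w / t)" using t by simp
  also have "\<dots> \<le> (t * u) powr q / q + (w / t) powr q' / q'"
    using t u w by (intro Youngs_inequality q q' conj) auto
  also have "\<dots> \<le> (t * u) powr q + (w / t) powr q'"
    using q q' by (intro add_mono) (simp_all add: divide_le_eq mult_le_cancel_left1)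
  also have "\<dots> = t powr q * u powr q + t powr (- q') * w powr q'"
    using t u w by (simp add: powr_mult powr_divide powr_minus_divide)
  finally show ?thesis by (simp add: q'_def)
qed

lemma exists_dyadic_scale:
  fixes r \<rho> :: real
  assumes "0 < \<rho>" "\<rho> < r"
  shows "\<exists>k::nat. r / 2 ^ (k + 1) < \<rho> \<and> \<rho> \<le> r / 2 ^ k"
proof -
  define P where "P k \<longleftrightarrow> r / 2 ^ (k + 1) < \<rho>" for k :: nat
  obtain n :: nat where "r / \<rho> < 2 ^ n" using real_arch_pow[of 2 "r / \<rho>"] by auto
  then have "P n" using assms by (simp add: P_def field_simps)
  define k where "k = (LEAST k. P k)"
  have "P k" unfolding k_def by (rule LeastI) fact
  moreover have "\<rho> \<le> r / 2 ^ k"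
  proof (cases k)
    case (Suc j)
    then have "\<not> P j" using not_less_Least[of j P] unfolding k_def[symmetric] by auto
    then show ?thesis using Suc by (simp add: P_def)
  qed (use assms in simp)
  ultimately show ?thesis unfolding P_def by blast
qed

lemma norm_powr_le_dyadic_sum:
  fixes c z :: "'a::real_normed_vector" and a r :: real
  assumes "0 \<le> a"
  shows "ennreal (indicator (ball c r) z * norm (z - c) powr (-a))
    \<le> (\<Sum>k. ennreal ((r / 2 ^ (k + 1)) powr (-a) * indicator (cball c (r / 2 ^ k)) z))"
proof (cases "z \<in> ball c r \<and> z \<noteq> c")
  case True
  define \<rho> where "\<rho> = norm (z - c)"
  have "0 < \<rho>" "\<rho> < r" using True by (auto simp: \<rho>_def dist_norm norm_minus_commute)
  then obtain k where k: "r / 2 ^ (k + 1) < \<rho>" "\<rho> \<le> r / 2 ^ k"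
    using exists_dyadic_scale by blast
  have "ennreal (indicator (ball c r) z * norm (z - c) powr (-a)) = ennreal (\<rho> powr (-a))"
    using True by (simp add: \<rho>_def)
  also have "\<dots> \<le> ennreal ((r / 2 ^ (k + 1)) powr (-a) * indicator (cball c (r / 2 ^ k)) z)"
    using k assms \<open>0 < \<rho>\<close> by (intro ennreal_leI)
      (auto simp: dist_norm \<rho>_def norm_minus_commute intro: powr_mono2')
  also have "\<dots> \<le> (\<Sum>k. ennreal ((r / 2 ^ (k + 1)) powr (-a) * indicator (cball c (r / 2 ^ k)) z))"
    using sum_le_suminf[OF summableI, of "{k}"] by simp
  finally show ?thesis .
qed (auto simp: indicator_def)

lemma powr_dyadic_shell_eq:
  fixes r a V :: real and k N :: nat
  assumes r: "0 < r"
  shows "(r / 2 ^ (k + 1)) powr (-a) * (V * (r / 2 ^ k) ^ N)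
    = V * 2 powr a * r powr (N - a) * (2 powr (a - N)) ^ k"
proof -
  have "(2::real) ^ (k + 1) = 2 powr real (k + 1)" by (rule powr_realpow[symmetric]) simp
  then have e1: "(r / 2 ^ (k + 1)) powr (-a) = r powr (-a) * 2 powr (a * (k + 1))"
    using r by (simp add: powr_divide powr_minus_divide powr_powr mult.commute
        del: of_nat_Suc of_nat_add)
  have e2: "(r / 2 ^ k) ^ N = r powr N / 2 powr (k * N)"
    using r by (simp add: powr_realpow[symmetric] powr_divide powr_powr)
  have e3: "(2 powr (a - N)) ^ k = 2 powr ((a - N) * k)"
    by (simp add: powr_realpow[symmetric] powr_powr)
  have e4: "r powr (N - a) = r powr N * r powr (-a)"
    using r by (simp add: powr_add[symmetric])
  have "2 powr (a * (k + 1)) / 2 powr (k * N) = 2 powr a * 2 powr ((a - N) * k)"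
    by (simp add: powr_add[symmetric] powr_diff[symmetric] algebra_simps)
  then show ?thesis unfolding e1 e2 e3 e4 by (simp add: field_simps)
qed

lemma nn_integral_ball_norm_powr_le:
  fixes c :: "'a::euclidean_space" and a r :: real
  assumes a: "0 \<le> a" "a < DIM('a)" and r: "0 < r"
  shows "(\<integral>\<^sup>+z. ennreal (indicator (ball c r) z * norm (z - c) powr (-a)) \<partial>lborel)
    \<le> ennreal (unit_ball_vol DIM('a) * 2 powr a / (1 - 2 powr (a - DIM('a))) * r powr (DIM('a) - a))"
proof -
  define N where "N = DIM('a)"
  define V where "V = unit_ball_vol N"
  have V: "0 \<le> V" unfolding V_def unit_ball_vol_def by (intro divide_nonneg_pos) auto
  have ratio: "2 powr (a - N) < 1" using a by (intro powr_less_one) (auto simp: N_def)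
  have "(\<integral>\<^sup>+z. ennreal (indicator (ball c r) z * norm (z - c) powr (-a)) \<partial>lborel)
      \<le> (\<integral>\<^sup>+z. (\<Sum>k. ennreal ((r / 2 ^ (k + 1)) powr (-a) * indicator (cball c (r / 2 ^ k)) z)) \<partial>lborel)"
    using a by (intro nn_integral_mono norm_powr_le_dyadic_sum)
  also have "\<dots> = (\<Sum>k. \<integral>\<^sup>+z. ennreal ((r / 2 ^ (k + 1)) powr (-a)) * indicator (cball c (r / 2 ^ k)) z \<partial>lborel)"
    by (subst nn_integral_suminf) (auto simp: ennreal_mult indicator_def intro!: suminf_cong nn_integral_cong)
  also have "\<dots> = (\<Sum>k. ennreal (V * 2 powr a * r powr (N - a) * (2 powr (a - N)) ^ k))"
  proof (rule suminf_cong)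
    fix k :: nat
    have "(\<integral>\<^sup>+z. ennreal ((r / 2 ^ (k + 1)) powr (-a)) * indicator (cball c (r / 2 ^ k)) z \<partial>lborel)
        = ennreal ((r / 2 ^ (k + 1)) powr (-a)) * emeasure lborel (cball c (r / 2 ^ k))"
      by (rule nn_integral_cmult_indicator) simp
    also have "\<dots> = ennreal ((r / 2 ^ (k + 1)) powr (-a) * (V * (r / 2 ^ k) ^ N))"
      using r V by (simp add: emeasure_cball V_def N_def ennreal_mult)
    finally show "(\<integral>\<^sup>+z. ennreal ((r / 2 ^ (k + 1)) powr (-a)) * indicator (cball c (r / 2 ^ k)) z \<partial>lborel)
        = ennreal (V * 2 powr a * r powr (N - a) * (2 powr (a - N)) ^ k)"
      by (simp only: powr_dyadic_shell_eq[OF r])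
  qed
  also have "\<dots> = ennreal (V * 2 powr a * r powr (N - a) * (1 / (1 - 2 powr (a - N))))"
    using V ratio by (intro suminf_ennreal_eq sums_mult geometric_sums) auto
  finally show ?thesis by (simp add: V_def N_def)
qed

lemma
  fixes x :: "'a::euclidean_space" and a r :: real
  assumes a: "0 \<le> a" "a < DIM('a)" and r: "0 < r"
  shows integrable_ball_norm_powr:
      "integrable lebesgue (\<lambda>y. indicator (ball x r) y * norm (x - y) powr (-a))"
    and integral_ball_norm_powr_le:
      "(LINT y|lebesgue. indicator (ball x r) y * norm (x - y) powr (-a))
        \<le> unit_ball_vol DIM('a) * 2 powr a / (1 - 2 powr (a - DIM('a))) * r powr (DIM('a) - a)"
proof -
  let ?f = "\<lambda>y. indicator (ball x r) y * norm (x - y) powr (-a)"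
  let ?B = "unit_ball_vol DIM('a) * 2 powr a / (1 - 2 powr (a - DIM('a))) * r powr (DIM('a) - a)"
  have "?f \<in> borel_measurable borel"
    by (intro borel_measurable_times borel_measurable_indicator powr_real_measurable
        borel_measurable_continuous_onI continuous_intros) auto
  then have meas: "?f \<in> borel_measurable lebesgue"
    by (intro measurable_completion) simp
  have "(\<lambda>y. ennreal (?f y)) = (\<lambda>y. ennreal (indicator (ball x r) y * norm (y - x) powr (-a)))"
    by (simp add: norm_minus_commute)
  then have nn: "(\<integral>\<^sup>+y. ennreal (?f y) \<partial>lebesgue) \<le> ennreal ?B"
    using nn_integral_ball_norm_powr_le[OF a r, of x] by (simp add: nn_integral_completion)
  show int: "integrable lebesgue ?f"
    using nn by (intro integrableI_nonneg meas) (auto simp: top.not_eq_extremum intro: le_less_trans)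
  have "ennreal (integral\<^sup>L lebesgue ?f) = (\<integral>\<^sup>+y. ennreal (?f y) \<partial>lebesgue)"
    by (rule nn_integral_eq_integral[OF int, symmetric]) simp
  with nn have "ennreal (integral\<^sup>L lebesgue ?f) \<le> ennreal ?B" by simp
  moreover have "0 \<le> ?B"
  proof -
    have "2 powr (a - DIM('a)) < 1" using a by (intro powr_less_one) auto
    moreover have "0 \<le> unit_ball_vol DIM('a)"
      unfolding unit_ball_vol_def by (intro divide_nonneg_pos) auto
    ultimately show ?thesis by simp
  qed
  ultimately show "integral\<^sup>L lebesgue ?f \<le> ?B" by simp
qed

lemma integrable_if_powr_integrable_bounded_support:
  fixes F :: "'a::euclidean_space \<Rightarrow> real"
  assumes meas: "F \<in> borel_measurable lebesgue"
    and Lq: "integrable lebesgue (\<lambda>y. \<bar>F y\<bar> powr q)" and q: "1 \<le> q"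
    and bdd: "bounded {y. F y \<noteq> 0}"
  shows "integrable lebesgue F"
proof -
  obtain R where R: "{y. F y \<noteq> 0} \<subseteq> ball 0 R"
    using bounded_subset_ballD[OF bdd] by blast
  have "integrable lborel (indicator (ball (0::'a) R) :: 'a \<Rightarrow> real)"
    using emeasure_lborel_ball_finite[of "0::'a" R] by (intro integrable_real_indicator) auto
  then have ball: "integrable lebesgue (indicator (ball (0::'a) R) :: 'a \<Rightarrow> real)"
    by (subst integrable_completion) auto
  show ?thesis
  proof (rule Bochner_Integration.integrable_bound[OF Bochner_Integration.integrable_add[OF ball Lq] meas], rule AE_I2)
    fix y
    have "\<bar>F y\<bar> \<le> indicator (ball 0 R) y + \<bar>F y\<bar> powr q"
    proof (cases "\<bar>F y\<bar> \<le> 1")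
      case False
      then have "\<bar>F y\<bar> powr 1 \<le> \<bar>F y\<bar> powr q" using q by (intro powr_mono) auto
      then show ?thesis using False by (simp add: add_increasing)
    next
      case True
      then show ?thesis using R by (cases "F y = 0") (auto simp: indicator_def add_increasing2)
    qed
    then show "norm (F y) \<le> norm (indicator (ball 0 R) y + \<bar>F y\<bar> powr q)" by simp
  qed
qed

lemma exists_pos_powr_le:
  fixes B e \<epsilon> :: real
  assumes "0 < e" "0 < \<epsilon>" "0 \<le> B"
  shows "\<exists>\<delta>>0. B * \<delta> powr e \<le> \<epsilon>"
proof -
  define \<delta> where "\<delta> = (\<epsilon> / (B + 1)) powr (1 / e)"
  have "B * \<delta> powr e = \<epsilon> * (B / (B + 1))"
    using assms by (simp add: \<delta>_def powr_powr)
  also have "\<dots> \<le> \<epsilon>"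
    using assms by (simp add: divide_le_eq algebra_simps)
  finally show ?thesis using assms by (intro exI[of _ \<delta>]) (simp add: \<delta>_def)
qed

locale weakly_singular_potential =
  fixes K :: "'a::euclidean_space \<Rightarrow> 'a \<Rightarrow> 'b::{banach, second_countable_topology}"
    and F :: "'a \<Rightarrow> real" and C s q :: real
  assumes K_measurable: "\<And>x. K x \<in> borel_measurable lebesgue"
    and K_continuous: "\<And>x0 y. x0 \<noteq> y \<Longrightarrow> isCont (\<lambda>x. K x y) x0"
    and K_bound: "\<And>x y. F y \<noteq> 0 \<Longrightarrow> norm (K x y) \<le> C * norm (x - y) powr (- s)"
      \<comment> \<open>at \<open>x = y\<close> this forces \<open>K x x = 0\<close>, since \<open>0 powr - s = 0\<close>\<close>
    and C_nonneg: "0 \<le> C" and s_nonneg: "0 \<le> s"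
    and F_measurable: "F \<in> borel_measurable lebesgue"
    and F_integrable: "integrable lebesgue F"
    and F_Lq: "integrable lebesgue (\<lambda>y. \<bar>F y\<bar> powr q)"
    and q_gt_1: "1 < q"
    and subcritical: "s * (q / (q - 1)) < DIM('a)"
begin

definition potential :: "'a \<Rightarrow> 'b" where
  "potential x = (LINT y|lebesgue. F y *\<^sub>R K x y)"

definition q' :: real where
  "q' = q / (q - 1)"

lemma q'_gt_1: "1 < q'"
  using q_gt_1 unfolding q'_def by (simp add: less_divide_eq)

lemma singular_exponent_nonneg: "0 \<le> s * q'"
  using s_nonneg q'_gt_1 by simp

lemma singular_exponent_less: "s * q' < DIM('a)"
  using subcritical by (simp add: q'_def)

lemma norm_integrand_le:
  assumes t: "0 < t"
  shows "norm (F y *\<^sub>R K x y)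
    \<le> t powr q * \<bar>F y\<bar> powr q + t powr (- q') * C powr q' * norm (x - y) powr (- (s * q'))"
proof (cases "F y = 0")
  case False
  have "norm (K x y) powr q' \<le> (C * norm (x - y) powr (- s)) powr q'"
    using K_bound[OF False] q'_gt_1 by (intro powr_mono2) auto
  also have "\<dots> = C powr q' * norm (x - y) powr (- (s * q'))"
    using C_nonneg by (simp add: powr_mult powr_powr)
  finally have K: "norm (K x y) powr q' \<le> C powr q' * norm (x - y) powr (- (s * q'))" .
  have "norm (F y *\<^sub>R K x y) = \<bar>F y\<bar> * norm (K x y)" by simp
  also have "\<dots> \<le> t powr q * \<bar>F y\<bar> powr q + t powr (- q') * norm (K x y) powr q'"
    using Youngs_inequality_scaled[OF q_gt_1 _ _ t] by (simp add: q'_def)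
  also have "\<dots> \<le> t powr q * \<bar>F y\<bar> powr q + t powr (- q') * C powr q' * norm (x - y) powr (- (s * q'))"
    using K by (intro add_left_mono) (simp add: mult.assoc mult_left_mono)
  finally show ?thesis .
qed simp

lemma norm_integrand_le_far:
  assumes "0 < r" "r \<le> norm (x - y)"
  shows "norm (F y *\<^sub>R K x y) \<le> C * r powr (- s) * \<bar>F y\<bar>"
proof (cases "F y = 0")
  case False
  have "norm (x - y) powr (- s) \<le> r powr (- s)"
    using assms s_nonneg by (intro powr_mono2') auto
  then have "norm (K x y) \<le> C * r powr (- s)"
    using K_bound[OF False, of x] C_nonneg by (auto intro: order_trans mult_left_mono)
  then show ?thesis
    by (simp add: mult.commute mult_left_mono)
qed simp

lemma integrable_integrand: "integrable lebesgue (\<lambda>y. F y *\<^sub>R K x y)"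
proof -
  let ?G = "\<lambda>y. \<bar>F y\<bar> powr q + C powr q' * (indicator (ball x 1) y * norm (x - y) powr (- (s * q')))
    + C * \<bar>F y\<bar>"
  have G: "integrable lebesgue ?G"
    using singular_exponent_nonneg singular_exponent_less
    by (intro Bochner_Integration.integrable_add integrable_mult_right F_Lq integrable_abs
        F_integrable integrable_ball_norm_powr) auto
  have meas: "(\<lambda>y. F y *\<^sub>R K x y) \<in> borel_measurable lebesgue"
    by (intro borel_measurable_scaleR F_measurable K_measurable)
  have bound: "norm (F y *\<^sub>R K x y) \<le> ?G y" for y
  proof (cases "norm (x - y) < 1")
    case True
    then have "norm (F y *\<^sub>R K x y) \<le> \<bar>F y\<bar> powr q + C powr q' * norm (x - y) powr (- (s * q'))"
      using norm_integrand_le[of 1 y x] by simp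
    also have "\<dots> \<le> ?G y"
      using True C_nonneg by (simp add: dist_norm)
    finally show ?thesis .
  next
    case False
    then have "norm (F y *\<^sub>R K x y) \<le> C * \<bar>F y\<bar>"
      using norm_integrand_le_far[of 1 x y] by simp
    also have "\<dots> \<le> ?G y"
      using False by (simp add: dist_norm)
    finally show ?thesis .
  qed
  show ?thesis
  proof (rule Bochner_Integration.integrable_bound[OF G meas], rule AE_I2)
    fix y
    show "norm (F y *\<^sub>R K x y) \<le> norm (?G y)"
      using bound[of y] abs_ge_self[of "?G y"] unfolding real_norm_def by linarith
  qed
qed

lemma near_part_le:
  assumes t: "0 < t" and \<delta>: "0 < \<delta>" and xc: "dist x c < \<delta>"
  shows "norm (LINT y:ball c \<delta>|lebesgue. F y *\<^sub>R K x y)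
    \<le> t powr q * (LINT y|lebesgue. \<bar>F y\<bar> powr q) + t powr (- q') * C powr q'
        * (LINT y|lebesgue. indicator (ball x (2 * \<delta>)) y * norm (x - y) powr (- (s * q')))"
proof -
  let ?I = "\<lambda>y. indicator (ball x (2 * \<delta>)) y * norm (x - y) powr (- (s * q'))"
  let ?G = "\<lambda>y. t powr q * \<bar>F y\<bar> powr q + t powr (- q') * C powr q' * ?I y"
  have I: "integrable lebesgue ?I"
    using singular_exponent_nonneg singular_exponent_less \<delta> by (intro integrable_ball_norm_powr) auto
  have bound: "norm (indicator (ball c \<delta>) y *\<^sub>R (F y *\<^sub>R K x y)) \<le> ?G y" for y
  proof (cases "y \<in> ball c \<delta>")
    case True
    then have "y \<in> ball x (2 * \<delta>)"
      using xc dist_triangle[of x y c] by (simp add: dist_commute)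
    then show ?thesis using True norm_integrand_le[OF t, of y x] by simp
  qed simp
  have "norm (LINT y:ball c \<delta>|lebesgue. F y *\<^sub>R K x y)
      \<le> (LINT y|lebesgue. norm (indicator (ball c \<delta>) y *\<^sub>R (F y *\<^sub>R K x y)))"
    unfolding set_lebesgue_integral_def by (rule integral_norm_bound)
  also have "\<dots> \<le> integral\<^sup>L lebesgue ?G"
    using bound I
    by (intro integral_mono integrable_norm integrable_mult_indicator integrable_integrand
        Bochner_Integration.integrable_add integrable_mult_right F_Lq) auto
  also have "\<dots> = t powr q * (LINT y|lebesgue. \<bar>F y\<bar> powr q) + t powr (- q') * C powr q'
        * integral\<^sup>L lebesgue ?I"
    using F_Lq I by simp
  finally show ?thesis .
qed

lemma near_part_small:
  assumes "0 < \<epsilon>"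
  obtains \<delta> where "0 < \<delta>"
    "\<And>x c. dist x c < \<delta> \<Longrightarrow> norm (LINT y:ball c \<delta>|lebesgue. F y *\<^sub>R K x y) \<le> \<epsilon>"
proof -
  define A where "A = (LINT y|lebesgue. \<bar>F y\<bar> powr q)"
  define e where "e = DIM('a) - s * q'"
  define V where "V = unit_ball_vol DIM('a) * 2 powr (s * q') / (1 - 2 powr (s * q' - DIM('a)))"
  have ball_le: "(LINT y|lebesgue. indicator (ball x r) y * norm (x - y) powr (- (s * q'))) \<le> V * r powr e"
    if "0 < r" for x :: 'a and r
    using integral_ball_norm_powr_le[OF singular_exponent_nonneg singular_exponent_less that]
    by (simp add: V_def e_def)
  have "0 \<le> (LINT y|lebesgue. indicator (ball (0::'a) 1) y * norm y powr (- (s * q')))"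
    by (intro integral_nonneg_AE) simp
  moreover have "(LINT y|lebesgue. indicator (ball (0::'a) 1) y * norm y powr (- (s * q'))) \<le> V"
    using ball_le[of 1 0] by simp
  ultimately have V: "0 \<le> V" by linarith
  have A: "0 \<le> A" unfolding A_def by (intro integral_nonneg_AE) simp
  obtain t where t: "0 < t" "A * t powr q \<le> \<epsilon> / 2"
    using exists_pos_powr_le[of q "\<epsilon> / 2" A] q_gt_1 assms A by auto
  obtain r where r: "0 < r" "(t powr (- q') * C powr q' * V) * r powr e \<le> \<epsilon> / 2"
    using exists_pos_powr_le[of e "\<epsilon> / 2" "t powr (- q') * C powr q' * V"] assms V
      singular_exponent_less by (auto simp: e_def)
  show ?thesis
  proof
    show "0 < r / 2" using r by simp
    fix x c :: 'a
    assume "dist x c < r / 2"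
    then have "norm (LINT y:ball c (r / 2)|lebesgue. F y *\<^sub>R K x y)
        \<le> t powr q * A + t powr (- q') * C powr q'
          * (LINT y|lebesgue. indicator (ball x r) y * norm (x - y) powr (- (s * q')))"
      using near_part_le[OF t(1), of "r / 2" x c] r by (simp add: A_def)
    also have "\<dots> \<le> t powr q * A + t powr (- q') * C powr q' * (V * r powr e)"
      using ball_le[OF r(1)] by (intro add_left_mono mult_left_mono) auto
    also have "\<dots> \<le> \<epsilon>"
      using t r by (simp add: algebra_simps)
    finally show "norm (LINT y:ball c (r / 2)|lebesgue. F y *\<^sub>R K x y) \<le> \<epsilon>" .
  qed
qed

lemma far_part_tendsto:
  assumes \<delta>: "0 < \<delta>" and xs: "xs \<longlonglongrightarrow> x0"
  shows "(\<lambda>k. LINT y:-ball x0 \<delta>|lebesgue. F y *\<^sub>R K (xs k) y)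
    \<longlonglongrightarrow> (LINT y:-ball x0 \<delta>|lebesgue. F y *\<^sub>R K x0 y)"
  unfolding set_lebesgue_integral_def
proof (rule integral_dominated_convergence_eventually[where w="\<lambda>y. C * (\<delta> / 2) powr (- s) * \<bar>F y\<bar>"])
  show "(\<lambda>y. indicator (- ball x0 \<delta>) y *\<^sub>R (F y *\<^sub>R K x y)) \<in> borel_measurable lebesgue" for x
    by (intro borel_measurable_scaleR borel_measurable_indicator F_measurable K_measurable) auto
  then show "(\<lambda>y. indicator (- ball x0 \<delta>) y *\<^sub>R (F y *\<^sub>R K (xs k) y)) \<in> borel_measurable lebesgue" for k .
  show "integrable lebesgue (\<lambda>y. C * (\<delta> / 2) powr (- s) * \<bar>F y\<bar>)"
    by (intro integrable_mult_right integrable_abs F_integrable)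
  show "AE y in lebesgue. (\<lambda>k. indicator (- ball x0 \<delta>) y *\<^sub>R (F y *\<^sub>R K (xs k) y))
      \<longlonglongrightarrow> indicator (- ball x0 \<delta>) y *\<^sub>R (F y *\<^sub>R K x0 y)"
  proof (rule AE_I2)
    fix y
    show "(\<lambda>k. indicator (- ball x0 \<delta>) y *\<^sub>R (F y *\<^sub>R K (xs k) y))
      \<longlonglongrightarrow> indicator (- ball x0 \<delta>) y *\<^sub>R (F y *\<^sub>R K x0 y)"
    proof (cases "y \<in> ball x0 \<delta>")
      case False
      then have "x0 \<noteq> y" using \<delta> by auto
      from isCont_tendsto_compose[OF K_continuous[OF this] xs] show ?thesis
        by (intro tendsto_intros)
    qed simp
  qed
  have "eventually (\<lambda>k. dist (xs k) x0 < \<delta> / 2) sequentially"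
    using xs \<delta> by (intro tendstoD) auto
  then show "eventually (\<lambda>k. AE y in lebesgue. norm (indicator (- ball x0 \<delta>) y *\<^sub>R (F y *\<^sub>R K (xs k) y))
      \<le> C * (\<delta> / 2) powr (- s) * \<bar>F y\<bar>) sequentially"
  proof (rule eventually_mono, intro AE_I2)
    fix k y
    assume near: "dist (xs k) x0 < \<delta> / 2"
    show "norm (indicator (- ball x0 \<delta>) y *\<^sub>R (F y *\<^sub>R K (xs k) y)) \<le> C * (\<delta> / 2) powr (- s) * \<bar>F y\<bar>"
    proof (cases "y \<in> ball x0 \<delta>")
      case False
      then have "\<delta> / 2 \<le> norm (xs k - y)"
        using near dist_triangle[of x0 y "xs k"] by (auto simp: dist_norm norm_minus_commute)
      then show ?thesis
        using False norm_integrand_le_far[of "\<delta> / 2" "xs k" y] \<delta> by simp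
    qed (use C_nonneg in simp)
  qed
qed

lemma potential_split:
  "potential x = (LINT y:ball c \<delta>|lebesgue. F y *\<^sub>R K x y) + (LINT y:-ball c \<delta>|lebesgue. F y *\<^sub>R K x y)"
proof -
  have int: "set_integrable lebesgue A (\<lambda>y. F y *\<^sub>R K x y)" if "A \<in> sets lebesgue" for A
    unfolding set_integrable_def using that by (intro integrable_mult_indicator integrable_integrand)
  show ?thesis
    using set_integral_Un[of "ball c \<delta>" "- ball c \<delta>", OF _ int int]
    by (simp add: potential_def set_lebesgue_integral_def)
qed

lemma isCont_potential: "isCont potential x0"
  unfolding continuous_at_sequentially comp_def
proof (intro allI impI tendstoI)
  fix xs :: "nat \<Rightarrow> 'a" and \<epsilon> :: real
  assume xs: "xs \<longlonglongrightarrow> x0" and "0 < \<epsilon>"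
  then have "0 < \<epsilon> / 4" by simp
  then obtain \<delta> where \<delta>: "0 < \<delta>"
    and near: "\<And>x c. dist x c < \<delta> \<Longrightarrow> norm (LINT y:ball c \<delta>|lebesgue. F y *\<^sub>R K x y) \<le> \<epsilon> / 4"
    using near_part_small by blast
  let ?near = "\<lambda>x. LINT y:ball x0 \<delta>|lebesgue. F y *\<^sub>R K x y"
  let ?far = "\<lambda>x. LINT y:-ball x0 \<delta>|lebesgue. F y *\<^sub>R K x y"
  have "eventually (\<lambda>k. dist (xs k) x0 < \<delta>) sequentially"
    using xs \<delta> by (rule tendstoD)
  moreover have "eventually (\<lambda>k. dist (?far (xs k)) (?far x0) < \<epsilon> / 2) sequentially"
    using far_part_tendsto[OF \<delta> xs] \<open>0 < \<epsilon>\<close> by (intro tendstoD) auto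
  ultimately show "eventually (\<lambda>k. dist (potential (xs k)) (potential x0) < \<epsilon>) sequentially"
  proof eventually_elim
    case (elim k)
    have "dist (potential (xs k)) (potential x0) = norm (?near (xs k) - ?near x0 + (?far (xs k) - ?far x0))"
      unfolding potential_split[of _ x0 \<delta>] dist_norm by (simp add: algebra_simps)
    also have "\<dots> \<le> norm (?near (xs k)) + norm (?near x0) + dist (?far (xs k)) (?far x0)"
      using norm_triangle_ineq[of "?near (xs k) - ?near x0" "?far (xs k) - ?far x0"]
        norm_triangle_ineq4[of "?near (xs k)" "?near x0"] unfolding dist_norm by linarith
    also have "\<dots> < \<epsilon>"
      using near[of "xs k" x0] near[of x0 x0] elim \<delta> by simp
    finally show ?case .
  qed
qed

end

locale ray_kernel =
  fixes \<psi> :: "'a::euclidean_space \<Rightarrow> real" and M :: real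
  assumes psi_continuous: "continuous_on UNIV \<psi>"
    and psi_vanishes: "\<And>z. \<psi> z \<noteq> 0 \<Longrightarrow> norm z < 1"
    and psi_bounded: "\<And>z. \<bar>\<psi> z\<bar> \<le> M"
begin

lemma M_nonneg: "0 \<le> M"
  using psi_bounded[of 0] by linarith

definition ray_density :: "'a \<Rightarrow> 'a \<Rightarrow> real \<Rightarrow> real" where
  "ray_density x y t = \<psi> (y + t *\<^sub>R (x - y)) * t ^ (DIM('a) - 1)"

definition ray_integral :: "'a \<Rightarrow> 'a \<Rightarrow> real" where
  "ray_integral x y = (LBINT t:{1..}. ray_density x y t)"

definition kernel :: "'a \<Rightarrow> 'a \<Rightarrow> 'a" where
  "kernel x y = ray_integral x y *\<^sub>R (x - y)"

lemma ray_integral_rescale: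
  assumes "x \<noteq> y"
  shows "(LBINT \<xi>:{norm (x - y)..}. \<psi> (y + (\<xi> / norm (x - y)) *\<^sub>R (x - y)) * \<xi> ^ (DIM('a) - 1))
      / norm (x - y) ^ DIM('a) = ray_integral x y"
proof -
  define d where "d = norm (x - y)"
  have d: "0 < d" using assms by (simp add: d_def)
  define H where "H \<xi> = indicator {d..} \<xi> *\<^sub>R (\<psi> (y + (\<xi> / d) *\<^sub>R (x - y)) * \<xi> ^ (DIM('a) - 1))" for \<xi>
  have "(LBINT \<xi>:{d..}. \<psi> (y + (\<xi> / d) *\<^sub>R (x - y)) * \<xi> ^ (DIM('a) - 1)) = integral\<^sup>L lborel H"
    by (simp add: set_lebesgue_integral_def H_def[abs_def])
  also have "\<dots> = \<bar>d\<bar> *\<^sub>R integral\<^sup>L lborel (\<lambda>t. H (0 + d * t))"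
    using d by (intro lborel_integral_real_affine) simp
  also have "(\<lambda>t. H (0 + d * t)) = (\<lambda>t. d ^ (DIM('a) - 1) * (indicator {1..} t *\<^sub>R ray_density x y t))"
  proof
    fix t
    have "indicator {d..} (d * t) = (indicator {1..} t :: real)"
      using d by (simp add: indicator_def)
    then show "H (0 + d * t) = d ^ (DIM('a) - 1) * (indicator {1..} t *\<^sub>R ray_density x y t)"
      using d by (simp add: H_def ray_density_def power_mult_distrib)
  qed
  also have "integral\<^sup>L lborel (\<lambda>t. d ^ (DIM('a) - 1) * (indicator {1..} t *\<^sub>R ray_density x y t))
      = d ^ (DIM('a) - 1) * ray_integral x y"
    by (simp add: ray_integral_def set_lebesgue_integral_def)
  finally have "(LBINT \<xi>:{d..}. \<psi> (y + (\<xi> / d) *\<^sub>R (x - y)) * \<xi> ^ (DIM('a) - 1))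
      = d ^ DIM('a) * ray_integral x y"
    using d by (simp add: power_eq_if)
  then show ?thesis using d by (simp add: d_def[symmetric])
qed

lemma ray_density_eq_0:
  assumes "1 \<le> t" "norm y + 1 \<le> t * norm (x - y)"
  shows "ray_density x y t = 0"
proof (rule ccontr)
  assume "ray_density x y t \<noteq> 0"
  then have "norm (y + t *\<^sub>R (x - y)) < 1"
    by (intro psi_vanishes) (auto simp: ray_density_def)
  moreover have "norm (t *\<^sub>R (x - y)) \<le> norm (y + t *\<^sub>R (x - y)) + norm y"
    by (metis add_diff_cancel_left' norm_triangle_ineq4)
  ultimately show False using assms by simp
qed

lemma continuous_on_ray_density: "continuous_on UNIV (ray_density x y)"
  unfolding ray_density_def[abs_def]
  by (intro continuous_intros continuous_on_compose2[OF psi_continuous]) auto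

lemma abs_ray_density_le: "1 \<le> t \<Longrightarrow> t \<le> T \<Longrightarrow> \<bar>ray_density x y t\<bar> \<le> M * T ^ (DIM('a) - 1)"
  unfolding ray_density_def abs_mult
  by (intro mult_mono psi_bounded M_nonneg) (auto intro: power_mono)

lemma integrable_truncated_ray_density:
  "integrable lborel (\<lambda>t. indicator {1..T} t * ray_density x y t)"
proof -
  have "set_integrable lborel {1..T} (ray_density x y)"
    by (rule borel_integrable_atLeastAtMost') (rule continuous_on_subset[OF continuous_on_ray_density], auto)
  then show ?thesis by (simp add: set_integrable_def)
qed

lemma ray_integral_truncate:
  assumes "1 \<le> T" "norm y + 1 \<le> T * norm (x - y)"
  shows "ray_integral x y = integral\<^sup>L lborel (\<lambda>t. indicator {1..T} t * ray_density x y t)"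
proof -
  have *: "indicator {1..} t *\<^sub>R ray_density x y t = indicator {1..T} t * ray_density x y t" for t
  proof (cases "t \<le> T")
    case False
    then have "norm y + 1 \<le> t * norm (x - y)"
      using assms(2) by (meson mult_right_mono norm_ge_zero order_trans nle_le)
    then show ?thesis using False assms(1) ray_density_eq_0[of t y x] by (auto simp: indicator_def)
  qed (auto simp: indicator_def)
  show ?thesis unfolding ray_integral_def set_lebesgue_integral_def by (simp only: *)
qed

lemma abs_truncated_ray_integral_le:
  assumes "1 \<le> T"
  shows "\<bar>integral\<^sup>L lborel (\<lambda>t. indicator {1..T} t * ray_density x y t)\<bar> \<le> (T - 1) * (M * T ^ (DIM('a) - 1))"
proof -
  have "\<bar>integral\<^sup>L lborel (\<lambda>t. indicator {1..T} t * ray_density x y t)\<bar>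
      \<le> integral\<^sup>L lborel (\<lambda>t. norm (indicator {1..T} t * ray_density x y t))"
    using integral_norm_bound by (metis real_norm_def)
  also have "\<dots> \<le> integral\<^sup>L lborel (\<lambda>t. (M * T ^ (DIM('a) - 1)) * indicator {1..T} t)"
    using integrable_truncated_ray_density
    by (intro integral_mono integrable_mult_right integrable_real_indicator)
      (auto simp: indicator_def emeasure_lborel_Icc_eq intro!: abs_ray_density_le[simplified])
  also have "\<dots> = (T - 1) * (M * T ^ (DIM('a) - 1))"
    using assms by (simp add: measure_lborel_Icc)
  finally show ?thesis .
qed

lemma norm_kernel_le:
  assumes "norm y \<le> R"
  shows "norm (kernel x y) \<le> M * (R + 1) ^ DIM('a) * norm (x - y) powr (1 - real DIM('a))"
proof (cases "x = y")
  case False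
  define d where "d = norm (x - y)"
  have d: "0 < d" using False by (simp add: d_def)
  define T where "T = max 1 ((norm y + 1) / d)"
  have T1: "1 \<le> T" by (simp add: T_def)
  have "norm y + 1 \<le> T * d" using d by (simp add: T_def field_simps max_def)
  then have g: "\<bar>ray_integral x y\<bar> \<le> (T - 1) * (M * T ^ (DIM('a) - 1))"
    using ray_integral_truncate[OF T1] abs_truncated_ray_integral_le[OF T1] by (simp add: d_def)
  have pw: "d powr (1 - real DIM('a)) = d / d ^ DIM('a)"
    using d by (simp add: powr_diff powr_realpow)
  show ?thesis
  proof (cases "(norm y + 1) / d \<le> 1")
    case True
    then have "ray_integral x y = 0" using g by (simp add: T_def)
    moreover have "0 \<le> M * (R + 1) ^ DIM('a) * (d / d ^ DIM('a))"
      using d M_nonneg order_trans[OF norm_ge_zero assms] by simp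
    ultimately show ?thesis using pw by (simp add: kernel_def d_def)
  next
    case False
    then have T: "T = (norm y + 1) / d" by (simp add: T_def)
    have "norm (kernel x y) \<le> (T - 1) * (M * T ^ (DIM('a) - 1)) * d"
      using g d by (simp add: kernel_def d_def mult_right_mono)
    also have "\<dots> \<le> T * (M * T ^ (DIM('a) - 1)) * d"
      using T1 d M_nonneg by (intro mult_right_mono) auto
    also have "\<dots> = M * T ^ DIM('a) * d"
      by (simp add: power_eq_if)
    also have "\<dots> = M * (norm y + 1) ^ DIM('a) * (d / d ^ DIM('a))"
      by (simp add: T power_divide)
    also have "\<dots> \<le> M * (R + 1) ^ DIM('a) * (d / d ^ DIM('a))"
      using assms M_nonneg d by (intro mult_right_mono mult_left_mono power_mono) auto
    finally show ?thesis using pw by (simp add: d_def)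
  qed
qed (simp add: kernel_def)

lemma tendsto_truncated_ray_integral:
  assumes p: "p \<longlonglongrightarrow> (x0, y0)"
  shows "(\<lambda>k. integral\<^sup>L lborel (\<lambda>t. indicator {1..T} t * ray_density (fst (p k)) (snd (p k)) t))
    \<longlonglongrightarrow> integral\<^sup>L lborel (\<lambda>t. indicator {1..T} t * ray_density x0 y0 t)"
proof (rule integral_dominated_convergence[where w="\<lambda>t. (M * T ^ (DIM('a) - 1)) * indicator {1..T} t"])
  show "(\<lambda>t. indicator {1..T} t * ray_density x y t) \<in> borel_measurable lborel" for x y
    using integrable_truncated_ray_density by blast
  then show "(\<lambda>t. indicator {1..T} t * ray_density (fst (p k)) (snd (p k)) t) \<in> borel_measurable lborel"
    for k .
  show "integrable lborel (\<lambda>t. (M * T ^ (DIM('a) - 1)) * indicator {1..T} t)"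
    by (intro integrable_mult_right integrable_real_indicator) (auto simp: emeasure_lborel_Icc_eq)
  show "AE t in lborel. norm (indicator {1..T} t * ray_density (fst (p k)) (snd (p k)) t)
      \<le> M * T ^ (DIM('a) - 1) * indicator {1..T} t" for k
    by (rule AE_I2) (auto simp: indicator_def intro!: abs_ray_density_le[simplified])
  show "AE t in lborel. (\<lambda>k. indicator {1..T} t * ray_density (fst (p k)) (snd (p k)) t)
      \<longlonglongrightarrow> indicator {1..T} t * ray_density x0 y0 t"
  proof (rule AE_I2)
    fix t
    have c: "isCont \<psi> (y0 + t *\<^sub>R (x0 - y0))"
      using psi_continuous by (simp add: continuous_on_eq_continuous_at)
    have "(\<lambda>k. snd (p k) + t *\<^sub>R (fst (p k) - snd (p k))) \<longlonglongrightarrow> y0 + t *\<^sub>R (x0 - y0)"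
      using tendsto_fst[OF p] tendsto_snd[OF p]
      by (intro tendsto_add tendsto_scaleR tendsto_diff tendsto_const) simp_all
    from isCont_tendsto_compose[OF c this]
    show "(\<lambda>k. indicator {1..T} t * ray_density (fst (p k)) (snd (p k)) t)
        \<longlonglongrightarrow> indicator {1..T} t * ray_density x0 y0 t"
      unfolding ray_density_def by (intro tendsto_intros)
  qed
qed

lemma isCont_ray_integral:
  assumes "x0 \<noteq> y0"
  shows "isCont (\<lambda>p. ray_integral (fst p) (snd p)) (x0, y0)"
  unfolding continuous_at_sequentially comp_def
proof (intro allI impI)
  fix p :: "nat \<Rightarrow> 'a \<times> 'a"
  assume p: "p \<longlonglongrightarrow> (x0, y0)"
  define d0 where "d0 = norm (x0 - y0)"
  have d0: "0 < d0" using assms by (simp add: d0_def)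
  define T where "T = max 1 ((norm y0 + 2) * 2 / d0)"
  have T1: "1 \<le> T" by (simp add: T_def)
  have T: "(norm y0 + 2) * 2 \<le> T * d0" using d0 by (simp add: T_def field_simps max_def)
  have px: "(\<lambda>k. fst (p k)) \<longlonglongrightarrow> x0" and py: "(\<lambda>k. snd (p k)) \<longlonglongrightarrow> y0"
    using tendsto_fst[OF p] tendsto_snd[OF p] by simp_all
  have "(\<lambda>k. norm (fst (p k) - snd (p k))) \<longlonglongrightarrow> d0"
    unfolding d0_def by (intro tendsto_norm tendsto_diff px py)
  then have "eventually (\<lambda>k. d0 / 2 < norm (fst (p k) - snd (p k))) sequentially"
    using d0 by (intro order_tendstoD) auto
  moreover have "eventually (\<lambda>k. norm (snd (p k)) < norm y0 + 1) sequentially"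
    using tendsto_norm[OF py] by (intro order_tendstoD) auto
  ultimately have "eventually (\<lambda>k. integral\<^sup>L lborel (\<lambda>t. indicator {1..T} t * ray_density (fst (p k)) (snd (p k)) t)
      = ray_integral (fst (p k)) (snd (p k))) sequentially"
  proof eventually_elim
    case (elim k)
    have "T * (d0 / 2) \<le> T * norm (fst (p k) - snd (p k))"
      using elim T1 by (intro mult_left_mono) auto
    then show ?case using ray_integral_truncate[OF T1] elim T by simp
  qed
  moreover have "ray_integral x0 y0 = integral\<^sup>L lborel (\<lambda>t. indicator {1..T} t * ray_density x0 y0 t)"
  proof (rule ray_integral_truncate[OF T1])
    show "norm y0 + 1 \<le> T * norm (x0 - y0)"
      by (rule order_trans[OF _ T[unfolded d0_def]]) simp
  qed
  ultimately show "(\<lambda>k. ray_integral (fst (p k)) (snd (p k))) \<longlonglongrightarrow> ray_integral (fst (x0, y0)) (snd (x0, y0))"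
    using tendsto_truncated_ray_integral[OF p, of T] by (simp add: tendsto_cong)
qed

lemma isCont_kernel_left: "x0 \<noteq> y \<Longrightarrow> isCont (\<lambda>x. kernel x y) x0"
  using continuous_at_compose[of x0 "\<lambda>x. (x, y)" "\<lambda>p. ray_integral (fst p) (snd p)"]
    isCont_ray_integral[of x0 y]
  unfolding kernel_def by (auto simp: comp_def intro!: continuous_intros)

lemma kernel_measurable: "kernel x \<in> borel_measurable lebesgue"
proof -
  have "continuous_on (UNIV - {x}) (kernel x)"
  proof (intro continuous_at_imp_continuous_on ballI)
    fix y0 assume "y0 \<in> UNIV - {x}"
    then show "isCont (kernel x) y0"
      using continuous_at_compose[of y0 "\<lambda>y. (x, y)" "\<lambda>p. ray_integral (fst p) (snd p)"]
        isCont_ray_integral[of x y0]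
      unfolding kernel_def[abs_def] by (auto simp: comp_def intro!: continuous_intros)
  qed
  then have "(\<lambda>y. indicator (UNIV - {x}) y *\<^sub>R kernel x y) \<in> borel_measurable borel"
    by (intro borel_measurable_continuous_on_indicator) auto
  moreover have "(\<lambda>y. indicator (UNIV - {x}) y *\<^sub>R kernel x y) = kernel x"
    by (auto simp: indicator_def kernel_def)
  ultimately show ?thesis
    by (intro measurable_completion) simp
qed

lemma weakly_singular_potential_kernel:
  assumes F_measurable: "F \<in> borel_measurable lebesgue"
    and F_Lq: "integrable lebesgue (\<lambda>y. \<bar>F y\<bar> powr q)"
    and F_support: "\<And>y. F y \<noteq> 0 \<Longrightarrow> norm y \<le> R" and R: "0 \<le> R"
    and q: "real DIM('a) < q"
  shows "weakly_singular_potential kernel F (M * (R + 1) ^ DIM('a)) (real DIM('a) - 1) q"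
proof
  show "kernel x \<in> borel_measurable lebesgue" for x
    by (rule kernel_measurable)
  show "isCont (\<lambda>x. kernel x y) x0" if "x0 \<noteq> y" for x0 y
    using that by (rule isCont_kernel_left)
  have "1 \<le> real DIM('a)" by simp
  then show "1 < q" using q by linarith
  then show "(real DIM('a) - 1) * (q / (q - 1)) < DIM('a)"
    using q by (simp add: field_simps)
  have "bounded {y. F y \<noteq> 0}"
    using F_support by (intro bounded_subset[OF bounded_cball[of 0 R]]) auto
  then show "integrable lebesgue F"
    using \<open>1 < q\<close> by (intro integrable_if_powr_integrable_bounded_support[OF F_measurable F_Lq]) simp_all
  show "norm (kernel x y) \<le> M * (R + 1) ^ DIM('a) * norm (x - y) powr (- (real DIM('a) - 1))"
    if "F y \<noteq> 0" for x y
    using norm_kernel_le[OF F_support[OF that], of x] by simp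
  show "0 \<le> M * (R + 1) ^ DIM('a)"
    using M_nonneg R by simp
  show "0 \<le> real DIM('a) - 1"
    by simp
qed (fact F_measurable F_Lq)+

lemma isCont_kernel_potential:
  assumes "F \<in> borel_measurable lebesgue" "integrable lebesgue (\<lambda>y. \<bar>F y\<bar> powr q)"
    and "\<And>y. F y \<noteq> 0 \<Longrightarrow> norm y \<le> R" "0 \<le> R" "real DIM('a) < q"
  shows "isCont (\<lambda>x. LINT y|lebesgue. F y *\<^sub>R kernel x y) x0"
proof -
  have potential: "weakly_singular_potential kernel F (M * (R + 1) ^ DIM('a)) (real DIM('a) - 1) q"
    using assms by (rule weakly_singular_potential_kernel)
  show ?thesis
    using weakly_singular_potential.isCont_potential[OF potential]
    unfolding weakly_singular_potential.potential_def[OF potential, abs_def] .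
qed

lemma integral_ray_formula_eq_kernel:
  "(LINT y:\<Omega>|lebesgue. (F y * (LBINT \<xi>:{norm (x - y)..}.
      \<psi> (y + (\<xi> / norm (x - y)) *\<^sub>R (x - y)) * \<xi> ^ (DIM('a) - 1)) / norm (x - y) ^ DIM('a)) *\<^sub>R (x - y))
    = (LINT y|lebesgue. (indicator \<Omega> y * F y) *\<^sub>R kernel x y)"
  unfolding set_lebesgue_integral_def[where M = lebesgue]
proof (rule Bochner_Integration.integral_cong[OF refl])
  fix y
  show "indicator \<Omega> y *\<^sub>R ((F y * (LBINT \<xi>:{norm (x - y)..}.
      \<psi> (y + (\<xi> / norm (x - y)) *\<^sub>R (x - y)) * \<xi> ^ (DIM('a) - 1)) / norm (x - y) ^ DIM('a)) *\<^sub>R (x - y))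
    = (indicator \<Omega> y * F y) *\<^sub>R kernel x y"
  proof (cases "x = y")
    case False
    have "F y * (LBINT \<xi>:{norm (x - y)..}.
        \<psi> (y + (\<xi> / norm (x - y)) *\<^sub>R (x - y)) * \<xi> ^ (DIM('a) - 1)) / norm (x - y) ^ DIM('a)
        = F y * ray_integral x y"
      using ray_integral_rescale[OF False] by (simp only: times_divide_eq_right[symmetric])
    then show ?thesis by (simp add: kernel_def)
  qed (simp add: kernel_def)
qed

end

lemma bounded_if_continuous_compact_supp:
  fixes f :: "'a::topological_space \<Rightarrow> real"
  assumes "continuous_on UNIV f" "compact (supp f)"
  obtains M where "\<And>z. \<bar>f z\<bar> \<le> M"
proof -
  have "compact (f ` supp f)"
    by (intro compact_continuous_image continuous_on_subset[OF assms(1)] assms(2)) simp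
  then obtain M where M: "\<forall>w\<in>f ` supp f. \<bar>w\<bar> \<le> M"
    using bounded_real[THEN iffD1, OF compact_imp_bounded] by blast
  have "\<bar>f z\<bar> \<le> \<bar>M\<bar>" for z
  proof (cases "z \<in> supp f")
    case False
    then have "f z = 0" using closure_subset[of "{x. f x \<noteq> 0}"] unfolding supp_def by blast
    then show ?thesis by simp
  qed (use M in force)
  then show ?thesis by (rule that)
qed

lemma ray_kernel_if_compact_supp:
  fixes \<psi> :: "'a::euclidean_space \<Rightarrow> real"
  assumes "continuous_on UNIV \<psi>" "compact (supp \<psi>)" "supp \<psi> \<subseteq> ball 0 1"
  obtains M where "ray_kernel \<psi> M"
proof -
  obtain M where "\<And>z. \<bar>\<psi> z\<bar> \<le> M"
    using bounded_if_continuous_compact_supp[OF assms(1,2)] by metis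
  moreover have "{z. \<psi> z \<noteq> 0} \<subseteq> ball 0 1"
    using closure_subset assms(3) unfolding supp_def by (rule order_trans)
  then have "\<psi> z \<noteq> 0 \<Longrightarrow> norm z < 1" for z
    by auto
  ultimately have "ray_kernel \<psi> M"
    using assms(1) by unfold_locales
  then show ?thesis by (rule that)
qed

theorem theorem3:
  fixes \<psi> :: "real ^ 'n \<Rightarrow> real"
    and \<Omega> :: "(real ^ 'n) set"
    and F :: "real ^ 'n \<Rightarrow> real"
    and q :: real
    and v :: "real ^ 'n \<Rightarrow> real ^ 'n"
  assumes n2: "CARD('n) \<ge> 2"
    and psi_smooth: "smooth \<psi>"
    and psi_compact: "compact (supp \<psi>)"
    and psi_supp: "supp \<psi> \<subseteq> ball 0 1"
    and psi_nz: "\<exists>x. \<psi> x \<noteq> 0"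
    and Omega_open: "open \<Omega>"
    and Omega_bdd: "bounded \<Omega>"
    and Omega_star: "\<forall>p\<in>cball 0 1. star_shaped_wrt \<Omega> p"
    and q_gt: "q > real CARD('n)"
    and F_meas: "set_borel_measurable lebesgue \<Omega> F"
    and F_Lq: "set_integrable lebesgue \<Omega> (\<lambda>y. \<bar>F y\<bar> powr q)"
    and v_def: "\<And>x. v x = (LINT y:\<Omega>|lebesgue. (F y *
        (LBINT \<xi>:{norm (x - y)..}.
            \<psi> (y + (\<xi> / norm (x - y)) *\<^sub>R (x - y)) * \<xi> ^ (CARD('n) - 1))
        / norm (x - y) ^ CARD('n)) *\<^sub>R (x - y))"
  shows "continuous_on UNIV v"
proof -
  have "continuous_on UNIV \<psi>"
    using psi_smooth unfolding smooth_def by (metis Ck.simps(1))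
  then obtain M where kernel: "ray_kernel \<psi> M"
    using psi_compact psi_supp by (rule ray_kernel_if_compact_supp)
  obtain R where R: "0 < R" "\<Omega> \<subseteq> ball 0 R"
    using bounded_subset_ballD[OF Omega_bdd] by blast
  let ?G = "\<lambda>y. indicator \<Omega> y * F y"
  have G_measurable: "?G \<in> borel_measurable lebesgue"
    using F_meas unfolding set_borel_measurable_def by simp
  have "(\<lambda>y. \<bar>?G y\<bar> powr q) = (\<lambda>y. indicator \<Omega> y *\<^sub>R \<bar>F y\<bar> powr q)"
    by (auto simp: indicator_def)
  then have G_Lq: "integrable lebesgue (\<lambda>y. \<bar>?G y\<bar> powr q)"
    using F_Lq unfolding set_integrable_def by simp
  have G_support: "norm y \<le> R" if "?G y \<noteq> 0" for y
    using that R by (auto simp: indicator_def split: if_splits)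
  have "isCont (\<lambda>x. LINT y|lebesgue. ?G y *\<^sub>R ray_kernel.kernel \<psi> x y) x" for x
    using R q_gt by (intro ray_kernel.isCont_kernel_potential[OF kernel G_measurable G_Lq G_support]) auto
  moreover have "v x = (LINT y|lebesgue. ?G y *\<^sub>R ray_kernel.kernel \<psi> x y)" for x
    using ray_kernel.integral_ray_formula_eq_kernel[OF kernel, of \<Omega> F x] by (simp add: v_def)
  ultimately show ?thesis
    by (auto intro: continuous_at_imp_continuous_on)
qed

end
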